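(* Fix $\varepsilon\in\{1,-1\}$ and $m\in\mathbb{R}$. Let $I\subset\mathbb{R}$ be an open interval, $A:I\to\mathrm{SL}(2,\mathbb{C})$ and $h:I\to\mathbb{R}$ smooth maps, and let $y:I\to Y$, $y(s)=(A(s);h(s),h'(s),h''(s))$. Then $y$ is an integral curve of the Euler--Lagrange system $(\mathcal{J},\omega)$ with $y^{\ast}\omega=ds$ if and only if \[ A^{-1}A' = H(h) \quad\text{and}\quad \frac{d}{ds}\,U(h,h',h'') = \left[\,U(h,h',h''),\,H(h)\,\right] \quad\text{on } I . \]
   Context: For $h\in\mathbb{R}$ put $H(h)=\begin{pmatrix}0&\varepsilon\\ 2\varepsilon h+\frac{m}{3}+i&0\end{pmatrix}\in\mathfrak{sl}(2,\mathbb{C})$, and for $(h,h_1,h_2)\in\mathbb{R}^3$ put \[ U(h,h_1,h_2)=\begin{pmatrix} i h_1 & 2i\varepsilon\left(h-\varepsilon\left(\frac{m}{3}+i\right)\right)\\[2pt] 2\left(h+\frac{2\varepsilon m}{3}\right)-i\varepsilon\left(h_2-4h^2+\frac{2\varepsilon m h}{3}+\frac{2m^2}{9}-2\right) & -ih_1\end{pmatrix}. \] The momentum space is $Y=\mathrm{SL}(2,\mathbb{C})\times\mathbb{R}^3$ with coordinates $(A;h,h_1,h_2)$. Write the Maurer--Cartan form of $\mathrm{SL}(2,\mathbb{C})$ (pulled back to $Y$) as $A^{-1}dA=\alpha+i\beta$ with $\alpha=\begin{pmatrix}\alpha^1_1&\alpha^1_2\\ \alpha^2_1&-\alpha^1_1\end{pmatrix}$,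 $\beta=\begin{pmatrix}\beta^1_1&\beta^1_2\\ \beta^2_1&-\beta^1_1\end{pmatrix}$ real-valued. Let $\omega=\beta^2_1$. The Euler--Lagrange system $(\mathcal{J},\omega)$ is the Pfaffian system on $Y$ generated by the 1-forms $\beta^1_1$, $\beta^1_2$, $\alpha^1_1$, $\alpha^1_2-\varepsilon\omega$, $\alpha^2_1-(2\varepsilon h+\frac{m}{3})\omega$, $dh-h_1\omega$, $dh_1-h_2\omega$, $dh_2-12hh_1\omega$, with independence condition $\omega\neq0$. An integral curve is a smooth curve $y$ in $Y$ on which all these generators pull back to zero and $y^\ast\omega$ vanishes nowhere. (These integral curves correspond to extremals of the functional $\int(m+k)\omega$ on null curves in de Sitter 3-space, with $h=\frac{\varepsilon}{2}(k-\frac{m}{3})$.) *)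

theory Defs
  imports "HOL-Analysis.Analysis"
begin

definition mat2 :: "complex \<Rightarrow> complex \<Rightarrow> complex \<Rightarrow> complex \<Rightarrow> complex^2^2" where
  "mat2 a b c d = (\<chi> i j. if i = 1 then (if j = 1 then a else b) else (if j = 1 then c else d))"

definition smooth_on :: "real set \<Rightarrow> (real \<Rightarrow> 'a::real_normed_vector) \<Rightarrow> bool" where
  "smooth_on S f \<longleftrightarrow> (\<exists>D::nat \<Rightarrow> real \<Rightarrow> 'a. D 0 = f \<and>
      (\<forall>n. \<forall>x\<in>S. (D n has_vector_derivative D (Suc n) x) (at x)))"

definition Hmat :: "real \<Rightarrow> real \<Rightarrow> real \<Rightarrow> complex^2^2" where
  "Hmat eps m h = mat2 0 (complex_of_real eps) (complex_of_real (2*eps*h + m/3) + \<i>) 0"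

definition Umat :: "real \<Rightarrow> real \<Rightarrow> real \<Rightarrow> real \<Rightarrow> real \<Rightarrow> complex^2^2" where
  "Umat eps m h h1 h2 = mat2
     (\<i> * complex_of_real h1)
     (2 * \<i> * complex_of_real eps * (complex_of_real h - complex_of_real eps * (complex_of_real (m/3) + \<i>)))
     (complex_of_real (2 * (h + 2*eps*m/3))
        - \<i> * complex_of_real eps * complex_of_real (h2 - 4*h^2 + 2*eps*m*h/3 + 2*m^2/9 - 2))
     (- \<i> * complex_of_real h1)"

text \<open>Points of Y = SL(2,C) x R^3 are (A, h, h1, h2); tangent vectors are (dA, dh, dh1, dh2).
  The Maurer--Cartan form evaluated on a tangent vector at A is A^{-1} dA = alpha + i beta.\<close>
type_synonym Ypt = "(complex^2^2) \<times> real \<times> real \<times> real"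

definition MC :: "Ypt \<Rightarrow> Ypt \<Rightarrow> complex^2^2" where
  "MC p v = matrix_inv (fst p) ** fst v"

definition omega_form :: "Ypt \<Rightarrow> Ypt \<Rightarrow> real" where
  "omega_form p v = Im (MC p v $ 2 $ 1)"

definition EL_generators :: "real \<Rightarrow> real \<Rightarrow> Ypt \<Rightarrow> Ypt \<Rightarrow> real list" where
  "EL_generators eps m p v =
     (case p of (A, h, h1, h2) \<Rightarrow> case v of (dA, dh, dh1, dh2) \<Rightarrow>
      let M = MC p v; w = omega_form p v in
      [Im (M$1$1), Im (M$1$2), Re (M$1$1), Re (M$1$2) - eps * w,
       Re (M$2$1) - (2*eps*h + m/3) * w,
       dh - h1 * w, dh1 - h2 * w, dh2 - 12*h*h1*w])"

definition EL_integral_curve :: "real \<Rightarrow> real \<Rightarrow> real set \<Rightarrow> (real \<Rightarrow> Ypt) \<Rightarrow> bool" where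
  "EL_integral_curve eps m I y \<longleftrightarrow> smooth_on I y \<and>
     (\<forall>s\<in>I. (\<forall>g \<in> set (EL_generators eps m (y s) (vector_derivative y (at s))). g = 0)
        \<and> omega_form (y s) (vector_derivative y (at s)) \<noteq> 0)"

end

theory Submission
  imports Defs
begin

text \<open>
  Along y = (A, h, h', h''), the generators dh - h1 \<omega> and dh1 - h2 \<omega> vanish as soon as
  \<omega> = ds, and det A = 1 makes A^-1 A' trace free; so the generators built from the
  Maurer--Cartan form together with \<omega> = ds say precisely A^-1 A' = H(h), and the only
  remaining condition is the last generator, h''' = 12 h h'. Comparing U(h, h', h'')' with
  [U, H] entrywise (using \<epsilon>^2 = 1), the Lax equation U' = [U, H] is the same ODE.
\<close>

lemma mat2_nth [simp]:
  "mat2 a b c d $ 1 $ 1 = a" "mat2 a b c d $ 1 $ 2 = b"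
  "mat2 a b c d $ 2 $ 1 = c" "mat2 a b c d $ 2 $ 2 = d"
  by (simp_all add: mat2_def)

lemma mat2_eta: "(M::complex^2^2) = mat2 (M$1$1) (M$1$2) (M$2$1) (M$2$2)"
  unfolding mat2_def vec_eq_iff by (auto simp: forall_2)

lemma mat2_eq_iff: "mat2 a b c d = mat2 a' b' c' d' \<longleftrightarrow> a = a' \<and> b = b' \<and> c = c' \<and> d = d'"
  by (metis mat2_nth)

lemma mat2_mult:
  "mat2 a b c d ** mat2 a' b' c' d' =
     mat2 (a*a' + b*c') (a*b' + b*d') (c*a' + d*c') (c*b' + d*d')"
  unfolding matrix_matrix_mult_def mat2_def vec_eq_iff by (auto simp: forall_2 sum_2)

lemma mat2_diff: "mat2 a b c d - mat2 a' b' c' d' = mat2 (a-a') (b-b') (c-c') (d-d')"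
  unfolding mat2_def vec_eq_iff by (auto simp: forall_2)

lemma mat2_one: "mat 1 = mat2 1 0 0 1"
  unfolding mat2_def mat_def vec_eq_iff by (auto simp: forall_2)

lemma trace_2: "trace (M::'a::semiring_1^2^2) = M$1$1 + M$2$2"
  by (simp add: trace_def sum_2)

lemma matrix_inv_mat2:
  assumes "a*d - b*c = (1::complex)"
  shows "matrix_inv (mat2 a b c d) = mat2 d (-b) (-c) a"
proof -
  let ?M = "mat2 a b c d" and ?N = "mat2 d (-b) (-c) a"
  have NM: "?M ** ?N = mat 1 \<and> ?N ** ?M = mat 1"
    using assms by (simp add: mat2_mult mat2_one mat2_eq_iff algebra_simps)
  then have "?M ** matrix_inv ?M = mat 1 \<and> matrix_inv ?M ** ?M = mat 1"
    unfolding matrix_inv_def by (rule someI)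
  then show ?thesis
    by (metis NM matrix_mul_assoc matrix_mul_lid matrix_mul_rid)
qed

lemma has_vector_derivative_mat2:
  assumes "(a has_vector_derivative a') (at x within S)" "(b has_vector_derivative b') (at x within S)"
    "(c has_vector_derivative c') (at x within S)" "(d has_vector_derivative d') (at x within S)"
  shows "((\<lambda>t. mat2 (a t) (b t) (c t) (d t)) has_vector_derivative mat2 a' b' c' d')
           (at x within S)"
proof -
  have "linear (\<lambda>(a, b, c, d). mat2 a b c d)"
    by (rule linearI) (auto simp: mat2_def vec_eq_iff forall_2)
  then have "bounded_linear (\<lambda>(a, b, c, d). mat2 a b c d)"
    by (simp add: linear_conv_bounded_linear)
  from bounded_linear.has_vector_derivative[OF this has_vector_derivative_Pair[OF assms(1)
        has_vector_derivative_Pair[OF assms(2) has_vector_derivative_Pair[OF assms(3,4)]]]]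
  show ?thesis by simp
qed

lemma has_vector_derivative_matrix_entry:
  assumes "(M has_vector_derivative M') F"
  shows "((\<lambda>t. M t $ i $ j) has_vector_derivative M' $ i $ j) F"
  using bounded_linear.has_vector_derivative
      [OF bounded_linear_compose[OF bounded_linear_vec_nth bounded_linear_vec_nth] assms] .

lemma has_vector_derivative_det_2:
  fixes A :: "real \<Rightarrow> complex^2^2"
  assumes "(A has_vector_derivative A') (at x within S)"
  shows "((\<lambda>t. det (A t)) has_vector_derivative
           A x$1$1 * A'$2$2 + A'$1$1 * A x$2$2 - (A x$1$2 * A'$2$1 + A'$1$2 * A x$2$1))
         (at x within S)"
  unfolding det_2
  by (intro has_vector_derivative_diff has_vector_derivative_mult
      has_vector_derivative_matrix_entry assms)

lemma trace_Maurer_Cartan_SL2: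
  fixes A :: "real \<Rightarrow> complex^2^2"
  assumes "open S" "x \<in> S" and det: "\<forall>t\<in>S. det (A t) = 1"
    and A': "(A has_vector_derivative A') (at x)"
  shows "trace (matrix_inv (A x) ** A') = 0"
proof -
  have "((\<lambda>t. 1) has_vector_derivative
           A x$1$1 * A'$2$2 + A'$1$1 * A x$2$2 - (A x$1$2 * A'$2$1 + A'$1$2 * A x$2$1)) (at x)"
    by (rule has_vector_derivative_transform_within_open[OF has_vector_derivative_det_2[OF A']
          assms(1,2)]) (use det in auto)
  then have Jacobi: "A x$1$1 * A'$2$2 + A'$1$1 * A x$2$2 - (A x$1$2 * A'$2$1 + A'$1$2 * A x$2$1) = 0"
    using vector_derivative_unique_at has_vector_derivative_const by metis
  have "A x$1$1 * A x$2$2 - A x$1$2 * A x$2$1 = 1"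
    using det assms(2) by (simp add: det_2)
  then have "matrix_inv (A x) = mat2 (A x$2$2) (- A x$1$2) (- A x$2$1) (A x$1$1)"
    by (subst mat2_eta) (rule matrix_inv_mat2)
  then show ?thesis
    using Jacobi by (subst mat2_eta[of A']) (simp add: trace_2 mat2_mult algebra_simps)
qed

lemma Umat_commutator_Hmat:
  assumes "eps^2 = 1"
  shows "Umat eps m h h1 h2 ** Hmat eps m h - Hmat eps m h ** Umat eps m h h1 h2 =
    mat2 (\<i> * of_real h2) (2*\<i> * of_real eps * of_real h1)
      (of_real (2*h1) - \<i> * of_real eps * of_real (4*h*h1 + 2*eps*m*h1/3)) (-\<i> * of_real h2)"
proof -
  have "eps = 1 \<or> eps = -1"
    using assms by (simp add: power2_eq_1_iff)
  then show ?thesis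
    unfolding Umat_def Hmat_def mat2_mult mat2_diff mat2_eq_iff
    by (auto simp: complex_eq_iff algebra_simps power2_eq_square) (simp_all add: field_simps)
qed

lemma Umat_has_vector_derivative:
  assumes "(f has_real_derivative f') (at x within S)" "(g has_real_derivative g') (at x within S)"
    "(k has_real_derivative k') (at x within S)"
  shows "((\<lambda>t. Umat eps m (f t) (g t) (k t)) has_vector_derivative
    mat2 (\<i> * of_real g') (2*\<i> * of_real eps * of_real f')
      (of_real (2*f') - \<i> * of_real eps * of_real (k' - 8*f x*f' + 2*eps*m*f'/3)) (-\<i> * of_real g'))
    (at x within S)"
proof -
  have "((\<lambda>t. k t - 4*(f t)^2 + 2*eps*m*f t/3 + 2*m^2/9 - 2) has_real_derivative
      k' - 8*f x*f' + 2*eps*m*f'/3) (at x within S)"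
    using assms by (auto intro!: derivative_eq_intros)
  moreover have "((\<lambda>t. 2 * (f t + 2*eps*m/3)) has_real_derivative 2*f') (at x within S)"
    using assms by (auto intro!: derivative_eq_intros)
  moreover have "((\<lambda>t. of_real (f t) - c) has_vector_derivative of_real f') (at x within S)" for c
    using has_vector_derivative_diff[OF has_vector_derivative_of_real[OF assms(1)]
        has_vector_derivative_const] by simp
  ultimately show ?thesis
    unfolding Umat_def using assms
    by (intro has_vector_derivative_mat2 has_vector_derivative_mult_right
        has_vector_derivative_of_real has_vector_derivative_diff has_vector_derivative_const)
      simp_all
qed

lemma Umat_Lax_equation_iff:
  assumes "eps^2 = 1" and "(f has_real_derivative g x) (at x)" "(g has_real_derivative k x) (at x)"
    "(k has_real_derivative k') (at x)"
  shows "((\<lambda>t. Umat eps m (f t) (g t) (k t)) has_vector_derivative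
            Umat eps m (f x) (g x) (k x) ** Hmat eps m (f x)
            - Hmat eps m (f x) ** Umat eps m (f x) (g x) (k x)) (at x)
         \<longleftrightarrow> k' = 12 * f x * g x" (is "?Lax \<longleftrightarrow> _")
proof -
  note U' = Umat_has_vector_derivative[OF assms(2-4), of eps m]
  have "eps \<noteq> 0"
    using assms(1) by auto
  let ?D = "mat2 (\<i> * of_real (k x)) (2*\<i> * of_real eps * of_real (g x))
      (of_real (2 * g x) - \<i> * of_real eps * of_real (k' - 8*f x*g x + 2*eps*m*g x/3))
      (-\<i> * of_real (k x))"
  have "?Lax \<longleftrightarrow> ?D = Umat eps m (f x) (g x) (k x) ** Hmat eps m (f x)
            - Hmat eps m (f x) ** Umat eps m (f x) (g x) (k x)"
    using U' by (auto dest: vector_derivative_unique_at[OF U'])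
  also have "\<dots> \<longleftrightarrow> eps * (k' - 8*f x*g x + 2*eps*m*g x/3) = eps * (4*f x*g x + 2*eps*m*g x/3)"
    unfolding Umat_commutator_Hmat[OF assms(1)] mat2_eq_iff by (simp add: complex_eq_iff)
  also have "\<dots> \<longleftrightarrow> k' = 12 * f x * g x"
    using \<open>eps \<noteq> 0\<close> by (simp add: algebra_simps)
  finally show ?thesis .
qed

lemma EL_generators_vanish_iff:
  assumes "trace (MC (A0, h0, h1, h2) (A1, h1, h2, h3)) = 0"
  shows "(\<forall>g\<in>set (EL_generators eps m (A0, h0, h1, h2) (A1, h1, h2, h3)). g = 0)
           \<and> omega_form (A0, h0, h1, h2) (A1, h1, h2, h3) = 1
         \<longleftrightarrow> MC (A0, h0, h1, h2) (A1, h1, h2, h3) = Hmat eps m h0 \<and> h3 = 12 * h0 * h1"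
proof -
  define M where "M = MC (A0, h0, h1, h2) (A1, h1, h2, h3)"
  have "M = mat2 (M$1$1) (M$1$2) (M$2$1) (- M$1$1)"
    using assms unfolding M_def[symmetric] trace_2
    by (subst mat2_eta) (simp add: mat2_eq_iff add_eq_0_iff)
  then have "M = Hmat eps m h0 \<longleftrightarrow>
      M$1$1 = 0 \<and> M$1$2 = of_real eps \<and> M$2$1 = of_real (2*eps*h0 + m/3) + \<i>"
    unfolding Hmat_def by (metis mat2_eq_iff neg_equal_0_iff_equal)
  then show ?thesis
    unfolding M_def[symmetric] EL_generators_def omega_form_def Let_def
    by (auto simp: complex_eq_iff M_def)
qed

lemma smooth_on_imp_differentiable:
  assumes "smooth_on S f" "x \<in> S"
  shows "f differentiable (at x)"
  using assms unfolding smooth_on_def by (metis differentiableI_vector)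

lemma smooth_on_has_real_derivative:
  fixes f :: "real \<Rightarrow> real"
  assumes "smooth_on S f" "x \<in> S"
  shows "(f has_real_derivative deriv f x) (at x)"
  using smooth_on_imp_differentiable[OF assms] DERIV_deriv_iff_real_differentiable by blast

lemma smooth_on_Pair:
  assumes "smooth_on S f" "smooth_on S g"
  shows "smooth_on S (\<lambda>t. (f t, g t))"
proof -
  obtain Df Dg where "Df 0 = f" "\<forall>n. \<forall>x\<in>S. (Df n has_vector_derivative Df (Suc n) x) (at x)"
    and "Dg 0 = g" "\<forall>n. \<forall>x\<in>S. (Dg n has_vector_derivative Dg (Suc n) x) (at x)"
    using assms unfolding smooth_on_def by blast
  then show ?thesis
    unfolding smooth_on_def
    by (intro exI[of _ "\<lambda>n t. (Df n t, Dg n t)"]) (auto intro: has_vector_derivative_Pair)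
qed

text \<open>The derivatives in smooth_on are pinned down only on S, hence the case split at order 0.\<close>

lemma smooth_on_deriv:
  fixes f :: "real \<Rightarrow> real"
  assumes "open S" "smooth_on S f"
  shows "smooth_on S (deriv f)"
proof -
  obtain D where D0: "D 0 = f" and D: "\<forall>n. \<forall>x\<in>S. (D n has_vector_derivative D (Suc n) x) (at x)"
    using assms(2) unfolding smooth_on_def by blast
  then have D': "(D n has_real_derivative D (Suc n) x) (at x)" if "x \<in> S" for n x
    using that by (simp add: has_real_derivative_iff_has_vector_derivative)
  have "(deriv f has_real_derivative D 2 x) (at x)" if "x \<in> S" for x
  proof (rule has_field_derivative_transform_within_open[OF _ assms(1) that])
    show "(D 1 has_real_derivative D 2 x) (at x)"
      using D'[OF that, of 1] by (simp add: numeral_2_eq_2)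
    show "D 1 y = deriv f y" if "y \<in> S" for y
      using D'[OF that, of 0] D0 by (simp add: DERIV_imp_deriv)
  qed
  then show ?thesis
    unfolding smooth_on_def
    by (intro exI[of _ "\<lambda>n. if n = 0 then deriv f else D (Suc n)"])
      (auto simp: D' has_real_derivative_iff_has_vector_derivative[symmetric] numeral_2_eq_2)
qed

lemma EL_conditions_at_iff_Lax_equation:
  fixes A :: "real \<Rightarrow> complex^2^2" and h :: "real \<Rightarrow> real"
  assumes eps2: "eps^2 = 1" and I: "open I" and s: "s \<in> I"
    and A_smooth: "smooth_on I A" and A_SL: "\<forall>t\<in>I. det (A t) = 1" and h_smooth: "smooth_on I h"
    and y_eq: "y = (\<lambda>t. (A t, h t, deriv h t, deriv (deriv h) t))"
  shows "(\<forall>g\<in>set (EL_generators eps m (y s) (vector_derivative y (at s))). g = 0)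
           \<and> omega_form (y s) (vector_derivative y (at s)) = 1
    \<longleftrightarrow> matrix_inv (A s) ** vector_derivative A (at s) = Hmat eps m (h s)
      \<and> ((\<lambda>t. Umat eps m (h t) (deriv h t) (deriv (deriv h) t)) has_vector_derivative
           (Umat eps m (h s) (deriv h s) (deriv (deriv h) s) ** Hmat eps m (h s)
            - Hmat eps m (h s) ** Umat eps m (h s) (deriv h s) (deriv (deriv h) s))) (at s)"
proof -
  have h_derivs_smooth: "smooth_on I (deriv h)" "smooth_on I (deriv (deriv h))"
    using smooth_on_deriv[OF I] h_smooth by blast+
  note h' = smooth_on_has_real_derivative[OF _ s]
  have A': "(A has_vector_derivative vector_derivative A (at s)) (at s)"
    using smooth_on_imp_differentiable[OF A_smooth s] vector_derivative_works by blast
  have "vector_derivative y (at s) = (vector_derivative A (at s), deriv h s,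
      deriv (deriv h) s, deriv (deriv (deriv h)) s)"
    unfolding y_eq using A' h_smooth h_derivs_smooth
    by (intro vector_derivative_at has_vector_derivative_Pair)
      (simp_all add: h' has_real_derivative_iff_has_vector_derivative[symmetric])
  then show ?thesis
    using EL_generators_vanish_iff trace_Maurer_Cartan_SL2[OF I s A_SL A']
      Umat_Lax_equation_iff[OF eps2 h'[OF h_smooth] h'[OF h_derivs_smooth(1)]
        h'[OF h_derivs_smooth(2)]]
    by (simp add: MC_def y_eq)
qed

theorem proposition3p3:
  fixes eps m :: real and I :: "real set"
    and A :: "real \<Rightarrow> complex^2^2" and h :: "real \<Rightarrow> real" and y :: "real \<Rightarrow> Ypt"
  assumes eps: "eps = 1 \<or> eps = -1"
    and I: "is_interval I" "open I" "I \<noteq> {}"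
    and A_smooth: "smooth_on I A" and A_SL: "\<forall>s\<in>I. det (A s) = 1"
    and h_smooth: "smooth_on I h"
    and y_def: "\<forall>s. y s = (A s, h s, deriv h s, deriv (deriv h) s)"
  shows "(EL_integral_curve eps m I y \<and>
          (\<forall>s\<in>I. omega_form (y s) (vector_derivative y (at s)) = 1))
     \<longleftrightarrow>
         (\<forall>s\<in>I. matrix_inv (A s) ** vector_derivative A (at s) = Hmat eps m (h s)
            \<and> ((\<lambda>t. Umat eps m (h t) (deriv h t) (deriv (deriv h) t)) has_vector_derivative
                 (Umat eps m (h s) (deriv h s) (deriv (deriv h) s) ** Hmat eps m (h s)
                  - Hmat eps m (h s) ** Umat eps m (h s) (deriv h s) (deriv (deriv h) s))) (at s))"
proof -
  have y_eq: "y = (\<lambda>t. (A t, h t, deriv h t, deriv (deriv h) t))"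
    using y_def by auto
  have "eps^2 = 1"
    using eps by auto
  note pointwise = EL_conditions_at_iff_Lax_equation[OF this I(2) _ A_smooth A_SL h_smooth y_eq,
      where m = m]
  have "smooth_on I y"
    unfolding y_eq using A_smooth h_smooth smooth_on_deriv[OF I(2)]
    by (intro smooth_on_Pair) blast+
  then show ?thesis
    unfolding EL_integral_curve_def using pointwise by auto
qed

end
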